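(* Let $G$ be a coloured graph with vertex set $V(G)=V(K_{\mathbb N})$ whose edge set is the (finite) set of edges coloured during the first $t\ge 0$ rounds of a game on $K_{\mathbb N}$ in which Builder selects edges and Painter colours them red or blue. Suppose $G$ is red-bipartite and $e$ is an edge of $K_{\mathbb N}$ not in $E(G)$ (selected by Builder in round $t+1$). Then $e$ can be coloured red or blue so that the resulting coloured graph $G'=G+e$ is red-bipartite and $f(G')\le f(G)+\varphi+1$.
   Context: $\varphi=(1+\sqrt5)/2$ is the golden ratio. A coloured graph is one in which every edge is red or blue. For $V'\subseteq V(G)$, $E[V']$ denotes the set of edges of $G$ with both ends in $V'$ ($E[\emptyset]=\emptyset$). A coloured graph $G$ is red-bipartite if there is a partition $V(G)=V_1\cup V_2$ (one part may be empty) such that no blue edge joins $V_1$ to $V_2$ and no red edge lies in $E[V_1]\cup E[V_2]$; such $(V_1,V_2)$ is a red-bipartition (equivalently, $G$ has no cycle with an odd number of red edges; each component has a red-bipartition unique up to swapping the parts). The potential $f$ is defined on coloured red-bipartite graphs with finitely many nontrivial components: if $G$ is an isolated vertex, $f(G)=0$; if $G$ is connected with at least two vertices and red-bipartition $(V_1,V_2)$, put $p_G(V_i)=\varphi|V_i|+|E[V_i]|$ for $i=1,2$, $a(G)=\max(p_G(V_1),p_G(V_2))$, $b(G)=\min(p_G(V_1),p_G(V_2))$, and $f(G)=\varphi a(G)-\varphi+\max(a(G)-\varphi^3,\,b(G))$; if $G$ has components $G_1,\dots,G_s$ (isolated vertices contributing $0$), then $f(G)=\sum_i f(G_i)$. 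*)

theory Defs
  imports Complex_Main
begin

text \<open>Coloured graphs on vertex set \<nat> (the vertex set of K_\<nat>): an edge set E of
  2-element subsets of nat, and the set R \<subseteq> E of red edges (E - R are the blue edges).\<close>

definition phi :: real where
  "phi = (1 + sqrt 5) / 2"

definition edges_in :: "nat set set \<Rightarrow> nat set \<Rightarrow> nat set set" where
  "edges_in E S = {e \<in> E. e \<subseteq> S}"

definition red_bip_on :: "nat set set \<Rightarrow> nat set set \<Rightarrow> nat set \<Rightarrow> bool" where
  "red_bip_on E R V1 \<longleftrightarrow> (\<forall>e\<in>E. e \<in> R \<longleftrightarrow> card (e \<inter> V1) = 1)"

definition red_bipartite :: "nat set set \<Rightarrow> nat set set \<Rightarrow> bool" where
  "red_bipartite E R \<longleftrightarrow> (\<exists>V1. red_bip_on E R V1)"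

definition adj :: "nat set set \<Rightarrow> nat \<Rightarrow> nat \<Rightarrow> bool" where
  "adj E u v \<longleftrightarrow> {u, v} \<in> E"

definition comp :: "nat set set \<Rightarrow> nat \<Rightarrow> nat set" where
  "comp E v = {u. (adj E)\<^sup>*\<^sup>* v u}"

definition nontriv_comps :: "nat set set \<Rightarrow> nat set set" where
  "nontriv_comps E = {comp E v | v. \<exists>e\<in>E. v \<in> e}"

definition pot :: "nat set set \<Rightarrow> nat set \<Rightarrow> real" where
  "pot E V = phi * real (card V) + real (card (edges_in E V))"

definition comp_f :: "nat set set \<Rightarrow> nat set set \<Rightarrow> nat set \<Rightarrow> real" where
  "comp_f E R C =
    (let V1 = (SOME V1. V1 \<subseteq> C \<and> red_bip_on (edges_in E C) R V1);
         V2 = C - V1;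
         a = max (pot E V1) (pot E V2);
         b = min (pot E V1) (pot E V2)
     in phi * a - phi + max (a - phi ^ 3) b)"

definition f :: "nat set set \<Rightarrow> nat set set \<Rightarrow> real" where
  "f E R = (\<Sum>C\<in>nontriv_comps E. comp_f E R C)"

end

theory Submission
  imports Defs
begin

(* Only the components containing the ends x, y of the new edge change.  The value of a
   component whose sides have potentials p and q equals (phi + 1)/2 (p + q) + K |p - q| / 2 - phi,
   where K is convex and piecewise linear with slopes phi - 1 and phi + 1, so everything reduces
   to estimates for K.  If x and y lie in one component, the colour of the new edge is forced by
   its red-bipartition, and p + q and |p - q| each grow by at most 1.  If they lie in components
   with imbalances d1 and d2, colouring the edge red gives the merged component the imbalance
   |d1 - d2|, colouring it blue gives |d1 + d2 + 1|, and one of the two is always cheap enough;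
   an isolated end behaves like a component with sides of potential phi and 0. *)

section \<open>Component values\<close>

lemma phi_square: "phi * phi = phi + 1"
proof -
  have "sqrt 5 * sqrt 5 = 5" by simp
  then show ?thesis unfolding phi_def by (simp add: field_simps)
qed

lemma phi_gt_1: "1 < phi"
  unfolding phi_def by simp

lemma phi_cube: "phi ^ 3 = 2 * phi + 1"
  using phi_square by (simp add: power3_eq_cube algebra_simps)

definition f_of_pots :: "real \<Rightarrow> real \<Rightarrow> real" where
  "f_of_pots p q = phi * max p q - phi + max (max p q - phi ^ 3) (min p q)"

lemma f_of_pots_commute: "f_of_pots p q = f_of_pots q p"
  unfolding f_of_pots_def by (simp add: max.commute min.commute)

definition kink :: "real \<Rightarrow> real" where
  "kink d = max ((phi - 1) * d) ((phi + 1) * d - 4 * phi - 2)"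

lemma f_of_pots_eq_kink: "f_of_pots p q = (phi + 1) / 2 * (p + q) + kink \<bar>p - q\<bar> / 2 - phi"
  unfolding f_of_pots_def kink_def phi_cube
  by (cases "p \<le> q") (auto simp add: max_def min_def abs_if field_simps)

lemma kink_ge: "(phi - 1) * d \<le> kink d"
  unfolding kink_def by simp

lemma kink_nonneg: "0 \<le> d \<Longrightarrow> 0 \<le> kink d"
  using kink_ge[of d] phi_gt_1 by (smt (verit) mult_nonneg_nonneg)

lemma kink_increment_ge:
  assumes "d \<le> d'" shows "(phi - 1) * (d' - d) \<le> kink d' - kink d"
  using assms kink_ge[of d'] unfolding kink_def by (auto simp: max_def algebra_simps)

lemma kink_increment_le:
  assumes "d \<le> d'" shows "kink d' - kink d \<le> (phi + 1) * (d' - d)"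
  using assms kink_ge[of d] unfolding kink_def by (auto simp: max_def algebra_simps)

lemma kink_mono: "d \<le> d' \<Longrightarrow> kink d \<le> kink d'"
  using kink_increment_ge[of d d'] phi_gt_1 by (smt (verit) mult_nonneg_nonneg)

text \<open>Here \<open>d1\<close> and \<open>d2\<close> are the imbalances \<open>p - q\<close> of two components: joining them by a
  red edge produces the imbalance \<open>d1 - d2\<close>, by a blue edge \<open>d1 + d2 + 1\<close>.\<close>
lemma kink_merge:
  "kink \<bar>d1 - d2\<bar> \<le> kink \<bar>d1\<bar> + kink \<bar>d2\<bar> + 2
   \<or> kink \<bar>d1 + d2 + 1\<bar> + phi + 1 \<le> kink \<bar>d1\<bar> + kink \<bar>d2\<bar> + 2"
proof -
  define M where "M = max \<bar>d1\<bar> \<bar>d2\<bar>"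
  define m where "m = min \<bar>d1\<bar> \<bar>d2\<bar>"
  have sum: "kink \<bar>d1\<bar> + kink \<bar>d2\<bar> = kink M + kink m"
    unfolding M_def m_def by (simp add: max_def min_def)
  have "0 \<le> m" unfolding m_def by simp
  consider "0 \<le> d1 * d2" | "d1 * d2 < 0" "m \<le> 1" | "d1 * d2 < 0" "1 < m" by linarith
  then show ?thesis
  proof cases
    case 1
    then have "\<bar>d1 - d2\<bar> \<le> M"
      unfolding M_def by (auto simp: zero_le_mult_iff max_def)
    then show ?thesis using sum kink_mono kink_nonneg[OF \<open>0 \<le> m\<close>] by fastforce
  next
    case 2
    have "\<bar>d1 - d2\<bar> \<le> M + m" unfolding M_def m_def by (auto simp add: max_def min_def)
    then have "kink \<bar>d1 - d2\<bar> \<le> kink (M + m)" by (rule kink_mono)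
    also have "\<dots> \<le> kink M + (phi + 1) * m" using kink_increment_le[of M "M + m"] \<open>0 \<le> m\<close> by simp
    also have "\<dots> \<le> kink M + kink m + 2" using kink_ge[of m] \<open>m \<le> 1\<close> by (simp add: algebra_simps)
    finally show ?thesis using sum by simp
  next
    case 3
    then have "\<bar>d1 + d2 + 1\<bar> \<le> M - m + 1"
      unfolding M_def m_def by (auto simp: mult_less_0_iff max_def min_def)
    then have "kink \<bar>d1 + d2 + 1\<bar> \<le> kink (M - m + 1)" by (rule kink_mono)
    also have "\<dots> \<le> kink M - (phi - 1) * (m - 1)"
      using kink_increment_ge[of "M - m + 1" M] \<open>1 < m\<close> by (simp add: algebra_simps)
    finally have "kink \<bar>d1 + d2 + 1\<bar> \<le> kink M - (phi - 1) * (m - 1)" .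
    moreover have "0 \<le> (phi - 1) * (m - 1)" using \<open>1 < m\<close> phi_gt_1 by simp
    ultimately show ?thesis using sum kink_ge[of m] by (simp add: algebra_simps)
  qed
qed

lemma kink_merge_isolated:
  "kink \<bar>d - phi\<bar> \<le> kink \<bar>d\<bar> + 1 \<or> kink \<bar>d + phi + 1\<bar> \<le> kink \<bar>d\<bar> - phi"
proof -
  have kink_phi: "kink phi = 1"
    unfolding kink_def using phi_square phi_gt_1 by (simp add: algebra_simps max_def)
  consider "phi \<le> d" | "0 \<le> d" "d < phi" | "- (phi + 1) \<le> d" "d < 0" | "d < - (phi + 1)"
    by linarith
  then show ?thesis
  proof cases
    case 1
    then have "kink \<bar>d - phi\<bar> \<le> kink \<bar>d\<bar>" using phi_gt_1 by (intro kink_mono) auto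
    then show ?thesis by simp
  next
    case 2
    then have "kink \<bar>d - phi\<bar> \<le> kink phi" by (intro kink_mono) auto
    then show ?thesis using kink_phi kink_nonneg[of "\<bar>d\<bar>"] by simp
  next
    case 3
    then have "kink \<bar>d - phi\<bar> = (phi - 1) * (phi - d)"
      unfolding kink_def using phi_gt_1 by (simp add: max_def algebra_simps)
    also have "\<dots> = 1 + (phi - 1) * \<bar>d\<bar>" using 3 phi_square by (simp add: algebra_simps)
    finally show ?thesis using kink_ge[of "\<bar>d\<bar>"] by simp
  next
    case 4
    then have "(phi - 1) * (phi + 1) \<le> kink \<bar>d\<bar> - kink \<bar>d + phi + 1\<bar>"
      using kink_increment_ge[of "- d - phi - 1" "- d"] phi_gt_1 by simp
    moreover have "(phi - 1) * (phi + 1) = phi" using phi_square by (simp add: algebra_simps)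
    ultimately show ?thesis by simp
  qed
qed

lemma f_of_pots_add_edge: "f_of_pots (p + 1) q \<le> f_of_pots p q + phi + 1"
proof -
  have "kink \<bar>p + 1 - q\<bar> \<le> kink (\<bar>p - q\<bar> + 1)" by (rule kink_mono) simp
  also have "\<dots> \<le> kink \<bar>p - q\<bar> + (phi + 1)"
    using kink_increment_le[of "\<bar>p - q\<bar>" "\<bar>p - q\<bar> + 1"] by simp
  finally show ?thesis unfolding f_of_pots_eq_kink by (simp add: field_simps)
qed

lemma f_of_pots_merge:
  "f_of_pots (a1 + b2) (b1 + a2) \<le> f_of_pots a1 b1 + f_of_pots a2 b2 + phi + 1
   \<or> f_of_pots (a1 + a2 + 1) (b1 + b2) \<le> f_of_pots a1 b1 + f_of_pots a2 b2 + phi + 1"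
proof -
  have "\<bar>a1 + b2 - (b1 + a2)\<bar> = \<bar>a1 - b1 - (a2 - b2)\<bar>"
    "\<bar>a1 + a2 + 1 - (b1 + b2)\<bar> = \<bar>a1 - b1 + (a2 - b2) + 1\<bar>" by argo+
  then show ?thesis
    using kink_merge[of "a1 - b1" "a2 - b2"] unfolding f_of_pots_eq_kink
    by (simp add: field_simps; argo)
qed

lemma f_of_pots_merge_isolated:
  "f_of_pots a (b + phi) \<le> f_of_pots a b + phi + 1
   \<or> f_of_pots (a + phi + 1) b \<le> f_of_pots a b + phi + 1"
proof -
  have "(phi + 1) / 2 * (a + (b + phi)) = (phi + 1) / 2 * (a + b) + phi + 1 / 2"
    "(phi + 1) / 2 * (a + phi + 1 + b) = (phi + 1) / 2 * (a + b) + (3 * phi + 2) / 2"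
    using phi_square by (simp_all add: field_simps)
  moreover have "\<bar>a - (b + phi)\<bar> = \<bar>a - b - phi\<bar>" "\<bar>a + phi + 1 - b\<bar> = \<bar>a - b + phi + 1\<bar>"
    by argo+
  ultimately show ?thesis
    using kink_merge_isolated[of "a - b"] unfolding f_of_pots_eq_kink by argo
qed

text \<open>An isolated vertex contributes nothing to \<open>f\<close> but enters the merged component as a side
  of potential \<open>phi\<close> opposite an empty one.\<close>
lemma f_of_pots_merge_components:
  fixes a1 b1 a2 b2 :: real
  assumes "t1 \<or> a1 = phi \<and> b1 = 0" and "t2 \<or> a2 = phi \<and> b2 = 0"
  defines "S \<equiv> (if t1 then f_of_pots a1 b1 else 0) + (if t2 then f_of_pots a2 b2 else 0) + phi + 1"
  shows "f_of_pots (a1 + b2) (b1 + a2) \<le> S \<or> f_of_pots (a1 + a2 + 1) (b1 + b2) \<le> S"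
proof (cases t1; cases t2)
  assume "t1" "t2"
  then show ?thesis using f_of_pots_merge[of a1 b2 b1 a2] unfolding S_def by simp
next
  assume "t1" "\<not> t2"
  then show ?thesis using assms(2) f_of_pots_merge_isolated[of a1 b1] unfolding S_def by simp
next
  assume "\<not> t1" "t2"
  then show ?thesis using assms(1) f_of_pots_merge_isolated[of a2 b2] unfolding S_def
    by (simp add: f_of_pots_commute[of "phi + b2"] add.commute add.left_commute)
next
  assume "\<not> t1" "\<not> t2"
  have "f_of_pots phi phi = phi + 1"
    unfolding f_of_pots_def using phi_square phi_cube phi_gt_1 by simp
  then show ?thesis using assms \<open>\<not> t1\<close> \<open>\<not> t2\<close> unfolding S_def by simp
qed

section \<open>Components\<close>

definition simple_edges :: "nat set set \<Rightarrow> bool" where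
  "simple_edges E \<longleftrightarrow> (\<forall>d\<in>E. \<exists>p q. p \<noteq> q \<and> d = {p, q})"

lemma simple_edgesE:
  assumes "simple_edges E" "d \<in> E"
  obtains p q where "p \<noteq> q" "d = {p, q}"
  using assms unfolding simple_edges_def by blast

lemma simple_edges_insert: "simple_edges E \<Longrightarrow> p \<noteq> q \<Longrightarrow> simple_edges (insert {p, q} E)"
  unfolding simple_edges_def by blast

lemma simple_edges_edges_in: "simple_edges E \<Longrightarrow> simple_edges (edges_in E C)"
  unfolding simple_edges_def edges_in_def by auto

lemma symp_adj: "symp (adj E)"
  unfolding adj_def by (auto intro: sympI simp: insert_commute)

lemma in_comp_self [simp]: "v \<in> comp E v"
  unfolding comp_def by simp

lemma comp_eq: "u \<in> comp E v \<Longrightarrow> comp E u = comp E v"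
  using sympD[OF symp_rtranclp[OF symp_adj]] unfolding comp_def
  by (metis (no_types, opaque_lifting) mem_Collect_eq rtranclp_trans subsetI subset_antisym)

lemma comp_disjoint: "comp E u \<noteq> comp E v \<Longrightarrow> comp E u \<inter> comp E v = {}"
  using comp_eq by blast

lemma comp_edge_closed: "{p, q} \<in> E \<Longrightarrow> p \<in> comp E v \<Longrightarrow> q \<in> comp E v"
  unfolding comp_def adj_def by (auto intro: rtranclp.rtrancl_into_rtrancl)

lemma comp_edge_iff: "{p, q} \<in> E \<Longrightarrow> p \<in> comp E v \<longleftrightarrow> q \<in> comp E v"
  using comp_edge_closed[of p q] comp_edge_closed[of q p] by (auto simp: insert_commute)

lemma edge_subset_comp:
  assumes "simple_edges E" "d \<in> E" "w \<in> d" "w \<in> comp E v"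
  shows "d \<subseteq> comp E v"
proof -
  obtain p q where "d = {p, q}" using simple_edgesE[OF assms(1,2)] by blast
  then show ?thesis using assms(2-4) comp_edge_iff[of p q E v] by auto
qed

lemma comp_subset: "comp E v \<subseteq> insert v (\<Union>E)"
proof
  fix u assume "u \<in> comp E v"
  then have "(adj E)\<^sup>*\<^sup>* v u" unfolding comp_def by simp
  then show "u \<in> insert v (\<Union>E)"
    by (induction rule: rtranclp_induct) (auto simp: adj_def)
qed

lemma finite_Union_edges: "finite E \<Longrightarrow> simple_edges E \<Longrightarrow> finite (\<Union>E)"
  by (auto elim: simple_edgesE)

lemma finite_comp: "finite E \<Longrightarrow> simple_edges E \<Longrightarrow> finite (comp E v)"
  using comp_subset finite_Union_edges by (meson finite.insertI finite_subset)

lemma comp_isolated: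
  assumes "\<forall>d\<in>E. v \<notin> d" shows "comp E v = {v}"
proof -
  have "u = v" if "(adj E)\<^sup>*\<^sup>* v u" for u
    using that by (cases rule: converse_rtranclpE) (use assms in \<open>auto simp: adj_def\<close>)
  then show ?thesis unfolding comp_def by auto
qed

lemma comp_in_nontriv_comps_iff: "comp E v \<in> nontriv_comps E \<longleftrightarrow> (\<exists>d\<in>E. v \<in> d)"
proof
  assume "comp E v \<in> nontriv_comps E"
  then obtain w d where w: "comp E v = comp E w" "d \<in> E" "w \<in> d"
    unfolding nontriv_comps_def by blast
  show "\<exists>d\<in>E. v \<in> d"
  proof (rule ccontr)
    assume "\<not> (\<exists>d\<in>E. v \<in> d)"
    then have "w = v" using comp_isolated[of E v] w(1) in_comp_self[of w E] by auto
    then show False using w \<open>\<not> (\<exists>d\<in>E. v \<in> d)\<close> by blast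
  qed
qed (auto simp: nontriv_comps_def)

lemma finite_nontriv_comps: "finite E \<Longrightarrow> simple_edges E \<Longrightarrow> finite (nontriv_comps E)"
proof -
  assume "finite E" "simple_edges E"
  moreover have "nontriv_comps E \<subseteq> comp E ` \<Union>E" unfolding nontriv_comps_def by auto
  ultimately show ?thesis using finite_Union_edges finite_surj by blast
qed

lemma comp_mono: "E \<subseteq> E' \<Longrightarrow> comp E v \<subseteq> comp E' v"
proof -
  assume "E \<subseteq> E'"
  then have "adj E \<le> adj E'" unfolding adj_def by auto
  then show ?thesis unfolding comp_def by (auto dest: rtranclp_mono[THEN predicate2D])
qed

lemma comp_insert_edge:
  "comp (insert {x, y} E) v =
    (if comp E v \<in> {comp E x, comp E y} then comp E x \<union> comp E y else comp E v)"
  (is "comp ?E' v = ?S")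
proof
  have in_S: "v \<in> ?S" using in_comp_self[of v E] by auto
  have step: "w \<in> ?S" if u: "u \<in> ?S" and uw: "adj ?E' u w" for u w
  proof -
    consider "{u, w} = {x, y}" | "{u, w} \<in> E" using uw unfolding adj_def by auto
    then show ?thesis
    proof cases
      case 1
      then have "u \<in> {x, y}" "w \<in> {x, y}" by (auto simp: doubleton_eq_iff)
      show ?thesis
      proof (cases "comp E v \<in> {comp E x, comp E y}")
        case True
        have "w \<in> comp E x \<union> comp E y" using \<open>w \<in> {x, y}\<close> by auto
        then show ?thesis by (simp only: if_P[OF True])
      next
        case False
        have "u \<notin> comp E v"
        proof
          assume "u \<in> comp E v"
          then have "comp E u = comp E v" by (rule comp_eq)
          with \<open>u \<in> {x, y}\<close> False show False by auto
        qed
        then show ?thesis using u False by simp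
      qed
    next
      case 2
      then show ?thesis using u comp_edge_closed[OF 2] by (simp split: if_splits) blast
    qed
  qed
  show "comp ?E' v \<subseteq> ?S"
  proof
    fix u assume "u \<in> comp ?E' v"
    then have "(adj ?E')\<^sup>*\<^sup>* v u" unfolding comp_def by simp
    then show "u \<in> ?S" by (induction rule: rtranclp_induct) (use in_S step in blast)+
  qed
  have sub: "comp E w \<subseteq> comp ?E' w" for w by (rule comp_mono) auto
  have "y \<in> comp ?E' x" using comp_edge_closed[of x y ?E' x] by simp
  then have xy: "comp ?E' y = comp ?E' x" by (rule comp_eq)
  show "?S \<subseteq> comp ?E' v"
  proof (cases "comp E v \<in> {comp E x, comp E y}")
    case True
    then have "v \<in> comp ?E' x" using in_comp_self[of v E] sub[of x] sub[of y] xy by auto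
    then have "comp ?E' v = comp ?E' x" by (rule comp_eq)
    then show ?thesis using True sub[of x] sub[of y] xy by auto
  qed (use sub in simp)
qed

lemma nontriv_comps_insert_edge:
  fixes E :: "nat set set" and x y :: nat
  defines "C0 \<equiv> comp E x \<union> comp E y"
  shows "nontriv_comps (insert {x, y} E) = insert C0 (nontriv_comps E - {comp E x, comp E y})"
    and "C0 \<notin> nontriv_comps E - {comp E x, comp E y}"
proof -
  let ?E' = "insert {x, y} E"
  have x: "comp ?E' x = C0" unfolding comp_insert_edge C0_def by simp
  have other: "comp ?E' v = comp E v" if "comp E v \<notin> {comp E x, comp E y}" for v
    using that unfolding comp_insert_edge by simp
  show "nontriv_comps ?E' = insert C0 (nontriv_comps E - {comp E x, comp E y})"
  proof (intro equalityI subsetI)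
    fix C assume "C \<in> nontriv_comps ?E'"
    then obtain v d where v: "C = comp ?E' v" "d \<in> ?E'" "v \<in> d" unfolding nontriv_comps_def by blast
    show "C \<in> insert C0 (nontriv_comps E - {comp E x, comp E y})"
    proof (cases "comp E v \<in> {comp E x, comp E y}")
      case True
      then show ?thesis using v(1) unfolding comp_insert_edge C0_def by simp
    next
      case False
      then have "d \<in> E" using v(2,3) by auto
      then show ?thesis using v False other unfolding nontriv_comps_def by auto
    qed
  next
    fix C assume "C \<in> insert C0 (nontriv_comps E - {comp E x, comp E y})"
    then consider "C = C0"
      | v d where "C = comp E v" "d \<in> E" "v \<in> d" "comp E v \<notin> {comp E x, comp E y}"
      unfolding nontriv_comps_def by auto
    then show "C \<in> nontriv_comps ?E'"
    proof cases
      case 1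
      then show ?thesis using x unfolding nontriv_comps_def by blast
    next
      case 2
      then show ?thesis using other[of v] unfolding nontriv_comps_def by blast
    qed
  qed
  show "C0 \<notin> nontriv_comps E - {comp E x, comp E y}"
  proof
    assume "C0 \<in> nontriv_comps E - {comp E x, comp E y}"
    then obtain v where "C0 = comp E v" "C0 \<notin> {comp E x, comp E y}"
      unfolding nontriv_comps_def by blast
    moreover have "x \<in> C0" unfolding C0_def by simp
    ultimately show False using comp_eq[of x E v] by simp
  qed
qed

lemma sum_nontriv_comps_pair:
  assumes "comp E x \<noteq> comp E y"
  shows "(\<Sum>C \<in> nontriv_comps E \<inter> {comp E x, comp E y}. g C)
    = (if \<exists>d\<in>E. x \<in> d then g (comp E x) else 0) + (if \<exists>d\<in>E. y \<in> d then g (comp E y) else 0)"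
proof -
  have "nontriv_comps E \<inter> {comp E x, comp E y}
      = (if \<exists>d\<in>E. x \<in> d then {comp E x} else {}) \<union> (if \<exists>d\<in>E. y \<in> d then {comp E y} else {})"
    using comp_in_nontriv_comps_iff[of E x] comp_in_nontriv_comps_iff[of E y] by auto
  then show ?thesis using assms by (simp add: add.commute)
qed

section \<open>Red-bipartitions and potentials\<close>

lemma card_doubleton_Int_eq_1: "p \<noteq> q \<Longrightarrow> card ({p, q} \<inter> S) = 1 \<longleftrightarrow> (p \<in> S) \<noteq> (q \<in> S)"
  by (cases "p \<in> S"; cases "q \<in> S") auto

lemma red_bip_on_iff:
  assumes "simple_edges E"
  shows "red_bip_on E R V \<longleftrightarrow>
    (\<forall>p q. {p, q} \<in> E \<longrightarrow> p \<noteq> q \<longrightarrow> ({p, q} \<in> R \<longleftrightarrow> (p \<in> V) \<noteq> (q \<in> V)))"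
  unfolding red_bip_on_def using simple_edgesE[OF assms] card_doubleton_Int_eq_1 by metis

definition side :: "nat set \<Rightarrow> nat \<Rightarrow> nat set \<Rightarrow> nat set" where
  "side V x C = {u \<in> C. (u \<in> V) = (x \<in> V)}"

lemma side_subset: "side V x C \<subseteq> C"
  unfolding side_def by auto

lemma in_side: "x \<in> C \<Longrightarrow> x \<in> side V x C"
  unfolding side_def by auto

lemma red_bip_on_side:
  assumes "simple_edges E" "red_bip_on E R V"
  shows "red_bip_on (edges_in E C) R (side V x C)"
  using assms
  unfolding red_bip_on_iff[OF assms(1)] red_bip_on_iff[OF simple_edges_edges_in[OF assms(1)]]
  unfolding edges_in_def side_def by auto

lemma red_bip_on_comp_unique:
  assumes "simple_edges E" "C = comp E v" "W \<subseteq> C" "W' \<subseteq> C"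
    and "red_bip_on (edges_in E C) R W" "red_bip_on (edges_in E C) R W'"
  shows "W' = W \<or> W' = C - W"
proof -
  have bip: "{p, q} \<in> R \<longleftrightarrow> (p \<in> U) \<noteq> (q \<in> U)"
    if "U \<in> {W, W'}" "{p, q} \<in> E" "p \<noteq> q" "p \<in> C" "q \<in> C" for U p q
    using that assms(5,6) card_doubleton_Int_eq_1[of p q U] unfolding red_bip_on_def edges_in_def
    by auto
  have agree: "((u \<in> W) = (u \<in> W')) = ((v \<in> W) = (v \<in> W'))" if "(adj E)\<^sup>*\<^sup>* v u" for u
    using that
  proof (induction rule: rtranclp_induct)
    case (step u w)
    then have e: "{u, w} \<in> E" unfolding adj_def by simp
    have "u \<in> C" using step(1) assms(2) unfolding comp_def by simp
    moreover have "w \<in> C" using comp_edge_closed[OF e] \<open>u \<in> C\<close> assms(2) by simp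
    moreover have "u \<noteq> w" using e by (auto elim: simple_edgesE[OF assms(1)] simp: doubleton_eq_iff)
    ultimately show ?case using step(3) bip[of W u w] bip[of W' u w] e by auto
  qed simp
  then show ?thesis using assms(2-4) unfolding comp_def by blast
qed

lemma comp_f_eq:
  assumes "simple_edges E" "C = comp E v" "W \<subseteq> C" "red_bip_on (edges_in E C) R W"
  shows "comp_f E R C = f_of_pots (pot E W) (pot E (C - W))"
proof -
  define V1 where "V1 = (SOME V1. V1 \<subseteq> C \<and> red_bip_on (edges_in E C) R V1)"
  have V1: "V1 \<subseteq> C" "red_bip_on (edges_in E C) R V1"
    unfolding atomize_conj V1_def by (rule someI[of _ W]) (use assms in auto)
  have "comp_f E R C = f_of_pots (pot E V1) (pot E (C - V1))"
    unfolding comp_f_def f_of_pots_def Let_def V1_def[symmetric] by simp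
  moreover have "C - (C - W) = W" using assms(3) by auto
  ultimately show ?thesis
    using red_bip_on_comp_unique[OF assms(1-3) V1(1) assms(4) V1(2)] f_of_pots_commute by auto
qed

lemma comp_f_eq_side:
  assumes "simple_edges E" "red_bip_on E R V"
  shows "comp_f E R (comp E x)
    = f_of_pots (pot E (side V x (comp E x))) (pot E (comp E x - side V x (comp E x)))"
  using comp_f_eq[OF assms(1) refl side_subset red_bip_on_side[OF assms]] .

lemma comp_f_cong:
  assumes "edges_in E' C = edges_in E C" "\<And>W. W \<subseteq> C \<Longrightarrow> pot E' W = pot E W"
    and "\<And>d. d \<in> edges_in E C \<Longrightarrow> d \<in> R' \<longleftrightarrow> d \<in> R"
    and "W \<subseteq> C" "red_bip_on (edges_in E C) R W"
  shows "comp_f E' R' C = comp_f E R C"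
proof -
  have "red_bip_on (edges_in E' C) R' = red_bip_on (edges_in E C) R"
    using assms(1,3) unfolding red_bip_on_def by auto
  moreover define V1 where "V1 = (SOME V1. V1 \<subseteq> C \<and> red_bip_on (edges_in E C) R V1)"
  moreover have "V1 \<subseteq> C"
    unfolding V1_def by (rule conjunct1, rule someI[of _ W]) (use assms in auto)
  ultimately show ?thesis
    unfolding comp_f_def Let_def using assms(2)[of V1] assms(2)[of "C - V1"] by auto
qed

lemma pot_insert_edge:
  assumes "finite E" "e \<notin> E"
  shows "pot (insert e E) W = pot E W + (if e \<subseteq> W then 1 else 0)"
proof -
  have "finite (edges_in E W)" "e \<notin> edges_in E W"
    using assms unfolding edges_in_def by auto
  moreover have
    "edges_in (insert e E) W = (if e \<subseteq> W then insert e (edges_in E W) else edges_in E W)"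
    unfolding edges_in_def by auto
  ultimately show ?thesis unfolding pot_def by simp
qed

lemma pot_Un_comps:
  assumes "finite E" "simple_edges E" "comp E x \<inter> comp E y = {}"
    and "W \<subseteq> comp E x \<union> comp E y"
  shows "pot E W = pot E (W \<inter> comp E x) + pot E (W \<inter> comp E y)"
proof -
  let ?Wx = "W \<inter> comp E x" and ?Wy = "W \<inter> comp E y"
  have "W = ?Wx \<union> ?Wy" "?Wx \<inter> ?Wy = {}" using assms(3,4) by blast+
  moreover have "finite ?Wx" "finite ?Wy" using finite_comp[OF assms(1,2)] by auto
  ultimately have vertices: "card W = card ?Wx + card ?Wy"
    by (metis card_Un_disjoint)
  have "d \<subseteq> comp E x \<or> d \<subseteq> comp E y" if d: "d \<in> E" "d \<subseteq> W" for d
  proof -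
    obtain p q where "d = {p, q}" using simple_edgesE[OF assms(2) d(1)] by blast
    then have "p \<in> d" "p \<in> comp E x \<union> comp E y" using d(2) assms(4) by auto
    then show ?thesis using edge_subset_comp[OF assms(2) d(1)] by blast
  qed
  then have "edges_in E W = edges_in E ?Wx \<union> edges_in E ?Wy"
    unfolding edges_in_def by auto
  moreover have "edges_in E ?Wx \<inter> edges_in E ?Wy = {}"
    using assms(3) unfolding edges_in_def by (auto elim!: simple_edgesE[OF assms(2)])
  moreover have "finite (edges_in E U)" for U using assms(1) unfolding edges_in_def by simp
  ultimately have "card (edges_in E W) = card (edges_in E ?Wx) + card (edges_in E ?Wy)"
    by (metis card_Un_disjoint)
  then show ?thesis unfolding pot_def using vertices by (simp add: algebra_simps)
qed

lemma pot_singleton: "simple_edges E \<Longrightarrow> pot E {x} = phi"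
  unfolding pot_def edges_in_def by (auto elim: simple_edgesE)

lemma pot_empty: "simple_edges E \<Longrightarrow> pot E {} = 0"
  unfolding pot_def edges_in_def by (auto elim: simple_edgesE)

lemma pot_sides_isolated:
  assumes "simple_edges E" "\<forall>d\<in>E. v \<notin> d"
  shows "pot E (side V v (comp E v)) = phi \<and> pot E (comp E v - side V v (comp E v)) = 0"
proof -
  have "side V v (comp E v) = {v}" unfolding comp_isolated[OF assms(2)] side_def by auto
  then show ?thesis using pot_singleton[OF assms(1)] pot_empty[OF assms(1)]
    unfolding comp_isolated[OF assms(2)] by simp
qed

lemma red_bip_on_flip_comp:
  assumes "simple_edges E" "red_bip_on E R U"
  shows "red_bip_on E R ((U - comp E v) \<union> (comp E v - U))"
  using assms(2) comp_edge_iff[of _ _ E v] unfolding red_bip_on_iff[OF assms(1)] by blast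

section \<open>Adding an edge\<close>

locale edge_addition =
  fixes E R :: "nat set set" and V :: "nat set" and x y :: nat
  assumes finite_E: "finite E" and simple_E: "simple_edges E" and R_subset: "R \<subseteq> E"
    and red_bip: "red_bip_on E R V" and x_ne_y: "x \<noteq> y" and new_edge: "{x, y} \<notin> E"
begin

abbreviation E' :: "nat set set" where
  "E' \<equiv> insert {x, y} E"

abbreviation R' :: "bool \<Rightarrow> nat set set" where
  "R' red \<equiv> if red then insert {x, y} R else R"

abbreviation Ax :: "nat set" where
  "Ax \<equiv> side V x (comp E x)"

abbreviation Ay :: "nat set" where
  "Ay \<equiv> side V y (comp E y)"

lemma simple_E': "simple_edges E'"
  using simple_E x_ne_y by (rule simple_edges_insert)

lemma comp_E'_x: "comp E' x = comp E x \<union> comp E y"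
  unfolding comp_insert_edge by simp

lemma red_bip_on_insert_edge:
  assumes "red_bip_on E R U"
  shows "red_bip_on E' (R' ((x \<in> U) \<noteq> (y \<in> U))) U"
proof -
  have "{x, y} \<notin> R" using R_subset new_edge by blast
  moreover have "{p, q} = {x, y} \<longleftrightarrow> p = x \<and> q = y \<or> p = y \<and> q = x" for p q
    by (rule doubleton_eq_iff)
  ultimately show ?thesis
    using assms new_edge unfolding red_bip_on_iff[OF simple_E] red_bip_on_iff[OF simple_E']
    by (auto simp: insert_commute)
qed

lemma f_insert_edge:
  "f E' (R' red) = f E R - (\<Sum>C \<in> nontriv_comps E \<inter> {comp E x, comp E y}. comp_f E R C)
     + comp_f E' (R' red) (comp E x \<union> comp E y)"
proof -
  let ?N0 = "nontriv_comps E - {comp E x, comp E y}"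
  have fin: "finite (nontriv_comps E)" by (rule finite_nontriv_comps[OF finite_E simple_E])
  have "comp_f E' (R' red) C = comp_f E R C" if C: "C \<in> ?N0" for C
  proof -
    obtain v where v: "C = comp E v" using C unfolding nontriv_comps_def by blast
    have "x \<notin> C" "y \<notin> C" using C comp_eq[of x E v] comp_eq[of y E v] unfolding v by auto
    then have untouched: "\<not> {x, y} \<subseteq> W" if "W \<subseteq> C" for W using that by auto
    show ?thesis
    proof (rule comp_f_cong)
      show "edges_in E' C = edges_in E C" using untouched[of C] unfolding edges_in_def by auto
      show "pot E' W = pot E W" if "W \<subseteq> C" for W
        using pot_insert_edge[OF finite_E new_edge] untouched[OF that] by simp
      show "d \<in> R' red \<longleftrightarrow> d \<in> R" if "d \<in> edges_in E C" for d
        using that new_edge unfolding edges_in_def by auto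
      show "red_bip_on (edges_in E C) R (side V v C)" by (rule red_bip_on_side[OF simple_E red_bip])
    qed (rule side_subset)
  qed
  then have "(\<Sum>C \<in> ?N0. comp_f E' (R' red) C) = (\<Sum>C \<in> ?N0. comp_f E R C)" by simp
  moreover have "f E R = (\<Sum>C \<in> ?N0. comp_f E R C)
      + (\<Sum>C \<in> nontriv_comps E \<inter> {comp E x, comp E y}. comp_f E R C)"
    unfolding f_def using sum.Int_Diff[OF fin] by (simp add: add.commute)
  moreover have "f E' (R' red) = comp_f E' (R' red) (comp E x \<union> comp E y)
      + (\<Sum>C \<in> ?N0. comp_f E' (R' red) C)"
    unfolding f_def nontriv_comps_insert_edge(1)
    by (rule sum.insert[OF _ nontriv_comps_insert_edge(2)]) (use fin in simp)
  ultimately show ?thesis by linarith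
qed

lemma add_edge_within_comp:
  assumes "y \<in> comp E x"
  shows "\<exists>red. red_bipartite E' (R' red) \<and> comp_f E' (R' red) (comp E x \<union> comp E y)
    \<le> (\<Sum>C \<in> nontriv_comps E \<inter> {comp E x, comp E y}. comp_f E R C) + phi + 1"
proof -
  let ?C = "comp E x"
  let ?A = "side V x ?C"
  define red where "red = ((x \<in> V) \<noteq> (y \<in> V))"
  have valid: "red_bip_on E' (R' red) V"
    unfolding red_def by (rule red_bip_on_insert_edge[OF red_bip])
  have same: "comp E y = ?C" using comp_eq[OF assms] .
  have "?C \<noteq> {x}" using assms x_ne_y by auto
  then have "?C \<in> nontriv_comps E" using comp_isolated comp_in_nontriv_comps_iff by blast
  then have "nontriv_comps E \<inter> {?C, comp E y} = {?C}" unfolding same by blast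
  then have old: "(\<Sum>C \<in> nontriv_comps E \<inter> {?C, comp E y}. comp_f E R C)
      = f_of_pots (pot E ?A) (pot E (?C - ?A))"
    using comp_f_eq_side[OF simple_E red_bip] by simp
  have "x \<in> ?A" by (rule in_side) simp
  have "comp E' x = ?C" unfolding comp_E'_x same by simp
  then have "comp_f E' (R' red) (?C \<union> comp E y) = f_of_pots (pot E' ?A) (pot E' (?C - ?A))"
    using comp_f_eq_side[OF simple_E' valid, of x] unfolding same by simp
  also have "\<dots> = f_of_pots (pot E ?A + (if {x, y} \<subseteq> ?A then 1 else 0)) (pot E (?C - ?A))"
    using pot_insert_edge[OF finite_E new_edge] \<open>x \<in> ?A\<close> by simp
  also have "\<dots> \<le> f_of_pots (pot E ?A) (pot E (?C - ?A)) + phi + 1"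
    using f_of_pots_add_edge phi_gt_1 by simp
  finally have "comp_f E' (R' red) (?C \<union> comp E y)
      \<le> (\<Sum>C \<in> nontriv_comps E \<inter> {?C, comp E y}. comp_f E R C) + phi + 1"
    unfolding old .
  moreover have "red_bipartite E' (R' red)" using valid unfolding red_bipartite_def ..
  ultimately show ?thesis by blast
qed

lemma comp_f_joined_comps:
  assumes "y \<notin> comp E x"
  shows "red_bipartite E' (R' red) \<and> comp_f E' (R' red) (comp E x \<union> comp E y) =
    (if red then f_of_pots (pot E Ax + pot E (comp E y - Ay)) (pot E (comp E x - Ax) + pot E Ay)
     else f_of_pots (pot E Ax + pot E Ay + 1) (pot E (comp E x - Ax) + pot E (comp E y - Ay)))"
proof -
  let ?Cx = "comp E x" and ?Cy = "comp E y"
  have disj: "?Cx \<inter> ?Cy = {}" using assms comp_disjoint[of E x y] in_comp_self[of y E] by blast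
  then have "x \<notin> ?Cy" using in_comp_self[of x E] by blast
  define U where "U = (if red = ((x \<in> V) \<noteq> (y \<in> V)) then V else (V - ?Cy) \<union> (?Cy - V))"
  have mem: "u \<in> U \<longleftrightarrow> (u \<in> V) \<noteq> (u \<in> ?Cy \<and> red \<noteq> ((x \<in> V) \<noteq> (y \<in> V)))" for u
    unfolding U_def by auto
  have "red_bip_on E R U"
    unfolding U_def using red_bip red_bip_on_flip_comp[OF simple_E red_bip] by simp
  then have "red_bip_on E' (R' ((x \<in> U) \<noteq> (y \<in> U))) U" by (rule red_bip_on_insert_edge)
  moreover have "((x \<in> U) \<noteq> (y \<in> U)) = red" using mem[of x] mem[of y] \<open>x \<notin> ?Cy\<close> by auto
  ultimately have valid: "red_bip_on E' (R' red) U" by (simp only:)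
  define W where "W = side U x (?Cx \<union> ?Cy)"
  have W_x: "W \<inter> ?Cx = Ax" and W_y: "W \<inter> ?Cy = (if red then ?Cy - Ay else Ay)"
    using mem disj \<open>x \<notin> ?Cy\<close> unfolding W_def side_def by auto
  have "W \<subseteq> ?Cx \<union> ?Cy" unfolding W_def by (rule side_subset)
  have "x \<in> W" "y \<in> W \<longleftrightarrow> \<not> red" using W_x W_y in_side[of x ?Cx V] in_side[of y ?Cy V] by auto
  have "comp_f E' (R' red) (?Cx \<union> ?Cy) = f_of_pots (pot E' W) (pot E' (?Cx \<union> ?Cy - W))"
    using comp_f_eq_side[OF simple_E' valid, of x] unfolding comp_E'_x W_def .
  moreover have
    "pot E' W = pot E Ax + pot E (if red then ?Cy - Ay else Ay) + (if red then 0 else 1)"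
    using pot_insert_edge[OF finite_E new_edge, of W]
      pot_Un_comps[OF finite_E simple_E disj \<open>W \<subseteq> _\<close>]
      \<open>x \<in> W\<close> \<open>y \<in> W \<longleftrightarrow> \<not> red\<close> unfolding W_x W_y by simp
  moreover have "pot E' (?Cx \<union> ?Cy - W) = pot E (?Cx - Ax) + pot E (if red then Ay else ?Cy - Ay)"
  proof -
    have "(?Cx \<union> ?Cy - W) \<inter> ?Cx = ?Cx - Ax" "(?Cx \<union> ?Cy - W) \<inter> ?Cy = (if red then Ay else ?Cy - Ay)"
      using W_x W_y side_subset[of V y ?Cy] by auto
    then show ?thesis
      using pot_insert_edge[OF finite_E new_edge] \<open>x \<in> W\<close>
        pot_Un_comps[OF finite_E simple_E disj, of "?Cx \<union> ?Cy - W"]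
      by simp
  qed
  ultimately have "comp_f E' (R' red) (?Cx \<union> ?Cy) =
    (if red then f_of_pots (pot E Ax + pot E (?Cy - Ay)) (pot E (?Cx - Ax) + pot E Ay)
     else f_of_pots (pot E Ax + pot E Ay + 1) (pot E (?Cx - Ax) + pot E (?Cy - Ay)))"
    by simp
  moreover have "red_bipartite E' (R' red)" using valid unfolding red_bipartite_def ..
  ultimately show ?thesis by blast
qed

lemma add_edge_between_comps:
  assumes "y \<notin> comp E x"
  shows "\<exists>red. red_bipartite E' (R' red) \<and> comp_f E' (R' red) (comp E x \<union> comp E y)
    \<le> (\<Sum>C \<in> nontriv_comps E \<inter> {comp E x, comp E y}. comp_f E R C) + phi + 1"
proof -
  have distinct: "comp E x \<noteq> comp E y" using assms in_comp_self[of y E] by blast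
  have old: "(\<Sum>C \<in> nontriv_comps E \<inter> {comp E x, comp E y}. comp_f E R C)
      = (if \<exists>d\<in>E. x \<in> d then f_of_pots (pot E Ax) (pot E (comp E x - Ax)) else 0)
      + (if \<exists>d\<in>E. y \<in> d then f_of_pots (pot E Ay) (pot E (comp E y - Ay)) else 0)"
    unfolding sum_nontriv_comps_pair[OF distinct] comp_f_eq_side[OF simple_E red_bip] ..
  have isolated: "(\<exists>d\<in>E. v \<in> d) \<or>
      pot E (side V v (comp E v)) = phi \<and> pot E (comp E v - side V v (comp E v)) = 0" for v
    using pot_sides_isolated[OF simple_E] by blast
  note merged = comp_f_joined_comps[OF assms]
  let ?S = "(\<Sum>C \<in> nontriv_comps E \<inter> {comp E x, comp E y}. comp_f E R C) + phi + 1"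
  from f_of_pots_merge_components[OF isolated isolated]
  have "comp_f E' (R' True) (comp E x \<union> comp E y) \<le> ?S
      \<or> comp_f E' (R' False) (comp E x \<union> comp E y) \<le> ?S"
    unfolding old using merged[of True] merged[of False] by simp
  then show ?thesis using merged by blast
qed

lemma exists_good_colouring:
  "\<exists>red. red_bipartite E' (R' red) \<and> f E' (R' red) \<le> f E R + phi + 1"
proof -
  obtain red where "red_bipartite E' (R' red)" and "comp_f E' (R' red) (comp E x \<union> comp E y)
      \<le> (\<Sum>C \<in> nontriv_comps E \<inter> {comp E x, comp E y}. comp_f E R C) + phi + 1"
    using add_edge_within_comp add_edge_between_comps by blast
  then show ?thesis using f_insert_edge[of red] by (intro exI[of _ red]) simp
qed

end

theorem lemma1:
  fixes E R :: "nat set set" and e :: "nat set"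
  assumes "finite E"
    and "\<forall>d\<in>E. \<exists>x y. x \<noteq> y \<and> d = {x, y}"
    and "R \<subseteq> E"
    and "red_bipartite E R"
    and "\<exists>x y. x \<noteq> y \<and> e = {x, y}"
    and "e \<notin> E"
  shows "\<exists>red::bool. red_bipartite (insert e E) (if red then insert e R else R)
           \<and> f (insert e E) (if red then insert e R else R) \<le> f E R + phi + 1"
proof -
  obtain x y where "x \<noteq> y" and e: "e = {x, y}" using assms(5) by blast
  obtain V where "red_bip_on E R V" using assms(4) unfolding red_bipartite_def by blast
  then interpret edge_addition E R V x y
    using assms \<open>x \<noteq> y\<close> unfolding e by unfold_locales (simp_all add: simple_edges_def)
  show ?thesis unfolding e by (rule exists_good_colouring)
qed

end
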